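(* Let $r,M\ge 1$, $N\ge 1$ a real number, and ${\bf e}_{mn}\in\mathbb{C}^{r}$ ($1\le m,n\le M$) arbitrary vectors. Define, for ${\bf W}$ in the cone $\mathbb{H}^r_+$ of $r\times r$ positive semidefinite Hermitian matrices, $$g({\bf W};N)=\frac{1}{M}\sum_{m=1}^{M}\log\sum_{n=1}^{M}\Big(1+\tfrac12{\bf e}_{mn}^{\mathrm H}{\bf W}{\bf e}_{mn}\Big)^{-N}.$$ Then $g(\cdot;N)$ is convex on $\mathbb{H}^r_+$ and matrix nonincreasing there: if ${\bf W}_1\succeq{\bf W}_2\succeq{\bf 0}$ then $g({\bf W}_1;N)\le g({\bf W}_2;N)$.
   Context: $\log$ is the base-2 logarithm. ${\bf U}\succeq{\bf V}$ means ${\bf U}-{\bf V}$ is positive semidefinite. (In the paper's application ${\bf e}_{mn}={\bf x}_m-{\bf x}_n$ are differences of points of a finite constellation, but the claim holds for arbitrary vectors.) *)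

theory Defs
  imports "HOL-Analysis.Analysis"
begin

definition qform :: "complex^'r^'r \<Rightarrow> complex^'r \<Rightarrow> complex" where
  "qform W x = (\<Sum>i\<in>UNIV. \<Sum>j\<in>UNIV. cnj (x$i) * W$i$j * x$j)"

definition hermitian_mat :: "complex^'r^'r \<Rightarrow> bool" where
  "hermitian_mat W \<longleftrightarrow> (\<forall>i j. W$i$j = cnj (W$j$i))"

definition psd_herm :: "complex^'r^'r \<Rightarrow> bool" where
  "psd_herm W \<longleftrightarrow> hermitian_mat W \<and> (\<forall>x. qform W x \<in> \<real> \<and> 0 \<le> Re (qform W x))"

definition gfun :: "nat \<Rightarrow> (nat \<Rightarrow> nat \<Rightarrow> complex^'r) \<Rightarrow> real \<Rightarrow> complex^'r^'r \<Rightarrow> real" where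
  "gfun M e N W = (1 / real M) * (\<Sum>m\<in>{1..M}. log 2 (\<Sum>n\<in>{1..M}.
       (1 + Re (qform W (e m n)) / 2) powr (- N)))"

end

theory Submission
  imports Defs
begin

text \<open>Each summand (1 + e^H W e / 2)^(-N) is a negative power of a positive affine function of W,
  hence log-convex on the cone. By Hoelder's inequality a finite sum of log-convex functions is
  again log-convex, so each log of an inner sum is convex, and so is their average.
  Monotonicity: W1 - W2 \<succeq> 0 raises every quadratic form, and t \<mapsto> t^(-N) is decreasing.\<close>

lemma qform_add: "qform (W + V) x = qform W x + qform V x"
  unfolding qform_def by (simp add: algebra_simps sum.distrib)

lemma qform_scaleR: "qform (c *\<^sub>R W) x = of_real c * qform W x"
  unfolding qform_def
  by (simp only: vector_scaleR_component) (simp add: scaleR_conv_of_real algebra_simps sum_distrib_left)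

lemma qform_diff: "qform (W - V) x = qform W x - qform V x"
  unfolding qform_def by (simp add: algebra_simps sum_subtractf)

lemma linear_Re_qform_divide: "linear (\<lambda>W. Re (qform W x) / c)"
  by (rule linearI) (simp_all add: qform_add qform_scaleR add_divide_distrib)

lemma psd_herm_Re_qform_nonneg: "psd_herm W \<Longrightarrow> 0 \<le> Re (qform W x)"
  by (simp add: psd_herm_def)

(* metis rather than simp: the symmetry W$i$j = cnj (W$j$i) loops as a rewrite rule. *)
lemma hermitian_mat_add: "hermitian_mat W \<Longrightarrow> hermitian_mat V \<Longrightarrow> hermitian_mat (W + V)"
  unfolding hermitian_mat_def by (metis complex_cnj_add vector_add_component)

lemma hermitian_mat_scaleR: "hermitian_mat W \<Longrightarrow> hermitian_mat (c *\<^sub>R W)"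
  unfolding hermitian_mat_def by (metis complex_cnj_scaleR vector_scaleR_component)

lemma psd_herm_add:
  assumes "psd_herm W" "psd_herm V"
  shows "psd_herm (W + V)"
  using assms by (auto simp: psd_herm_def hermitian_mat_add qform_add)

lemma psd_herm_scaleR:
  assumes "psd_herm W" "0 \<le> c"
  shows "psd_herm (c *\<^sub>R W)"
  using assms by (auto simp: psd_herm_def hermitian_mat_scaleR qform_scaleR)

lemma convex_psd_herm: "convex {W. psd_herm W}"
  by (rule convexI) (simp add: psd_herm_add psd_herm_scaleR)

lemma psd_herm_Re_qform_mono:
  assumes "psd_herm (W1 - W2)"
  shows "Re (qform W2 x) \<le> Re (qform W1 x)"
  using psd_herm_Re_qform_nonneg[OF assms, of x] by (simp add: qform_diff)

lemma psd_herm_summand_base_pos: "psd_herm W \<Longrightarrow> 0 < 1 + Re (qform W x) / 2"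
  using psd_herm_Re_qform_nonneg[of W x] by simp

lemma psd_herm_summand_pos: "psd_herm W \<Longrightarrow> 0 < (1 + Re (qform W x) / 2) powr a"
  using psd_herm_summand_base_pos[of W x] by simp

lemma Holder_inequality_sum:
  fixes a b :: "'i \<Rightarrow> real"
  assumes "finite I" "I \<noteq> {}" "\<And>i. i \<in> I \<Longrightarrow> a i > 0" "\<And>i. i \<in> I \<Longrightarrow> b i > 0"
    and "0 \<le> \<alpha>" "0 \<le> \<beta>" "\<alpha> + \<beta> = 1"
  shows "(\<Sum>i\<in>I. a i powr \<alpha> * b i powr \<beta>) \<le> (\<Sum>i\<in>I. a i) powr \<alpha> * (\<Sum>i\<in>I. b i) powr \<beta>"
proof -
  define A B where "A = (\<Sum>i\<in>I. a i)" and "B = (\<Sum>i\<in>I. b i)"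
  have "A > 0" "B > 0"
    unfolding A_def B_def using assms by (auto intro: sum_pos)
  have "a i powr \<alpha> * b i powr \<beta> \<le> A powr \<alpha> * B powr \<beta> * (\<alpha> / A * a i + \<beta> / B * b i)"
    if "i \<in> I" for i
  proof -
    have "(a i / A) powr \<alpha> * (b i / B) powr \<beta> \<le> \<alpha> * (a i / A) + \<beta> * (b i / B)"
      using \<open>A > 0\<close> \<open>B > 0\<close> assms that by (intro Youngs_inequality_0) auto
    then show ?thesis
      using \<open>A > 0\<close> \<open>B > 0\<close> assms(3,4)[OF that]
      by (simp add: powr_divide field_simps)
  qed
  then have "(\<Sum>i\<in>I. a i powr \<alpha> * b i powr \<beta>)
      \<le> (\<Sum>i\<in>I. A powr \<alpha> * B powr \<beta> * (\<alpha> / A * a i + \<beta> / B * b i))"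
    by (rule sum_mono)
  also have "\<dots> = A powr \<alpha> * B powr \<beta> * (\<alpha> / A * A + \<beta> / B * B)"
    unfolding A_def B_def by (simp only: sum.distrib sum_distrib_left[symmetric])
  also have "\<dots> = A powr \<alpha> * B powr \<beta>"
    using \<open>A > 0\<close> \<open>B > 0\<close> assms(7) by simp
  finally show ?thesis by (simp add: A_def B_def)
qed

lemma convex_on_ln_sum:
  fixes f :: "'i \<Rightarrow> 'a::real_vector \<Rightarrow> real"
  assumes "finite I" "I \<noteq> {}"
    and pos: "\<And>i x. i \<in> I \<Longrightarrow> x \<in> C \<Longrightarrow> f i x > 0"
    and log_convex: "\<And>i. i \<in> I \<Longrightarrow> convex_on C (\<lambda>x. ln (f i x))"
  shows "convex_on C (\<lambda>x. ln (\<Sum>i\<in>I. f i x))"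
proof
  show "convex C"
    using \<open>I \<noteq> {}\<close> log_convex convex_on_imp_convex by blast
  fix t :: real and x y
  assume t: "0 < t" "t < 1" and "x \<in> C" "y \<in> C"
  define z where "z = (1 - t) *\<^sub>R x + t *\<^sub>R y"
  have sum_f_pos: "0 < (\<Sum>i\<in>I. f i w)" if "w \<in> C" for w
    using assms that by (intro sum_pos) auto
  have "z \<in> C"
    unfolding z_def using \<open>convex C\<close> \<open>x \<in> C\<close> \<open>y \<in> C\<close> t by (simp add: convex_alt)
  have "f i z \<le> f i x powr (1 - t) * f i y powr t" if "i \<in> I" for i
  proof -
    have "ln (f i z) \<le> (1 - t) * ln (f i x) + t * ln (f i y)"
      unfolding z_def using convex_onD[OF log_convex[OF that]] t \<open>x \<in> C\<close> \<open>y \<in> C\<close> by simp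
    also have "\<dots> = ln (f i x powr (1 - t) * f i y powr t)"
      using pos[OF that \<open>x \<in> C\<close>] pos[OF that \<open>y \<in> C\<close>] by (simp add: ln_mult_pos)
    finally show ?thesis
      using pos[OF that \<open>z \<in> C\<close>] pos[OF that \<open>x \<in> C\<close>] pos[OF that \<open>y \<in> C\<close>]
      by (subst (asm) ln_le_cancel_iff) auto
  qed
  then have "(\<Sum>i\<in>I. f i z) \<le> (\<Sum>i\<in>I. f i x powr (1 - t) * f i y powr t)"
    by (rule sum_mono)
  also have "\<dots> \<le> (\<Sum>i\<in>I. f i x) powr (1 - t) * (\<Sum>i\<in>I. f i y) powr t"
    using assms t \<open>x \<in> C\<close> \<open>y \<in> C\<close> by (intro Holder_inequality_sum) auto
  finally have "ln (\<Sum>i\<in>I. f i z) \<le> ln ((\<Sum>i\<in>I. f i x) powr (1 - t) * (\<Sum>i\<in>I. f i y) powr t)"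
    using sum_f_pos[OF \<open>z \<in> C\<close>] by (rule ln_mono)
  also have "\<dots> = (1 - t) * ln (\<Sum>i\<in>I. f i x) + t * ln (\<Sum>i\<in>I. f i y)"
    using sum_f_pos[OF \<open>x \<in> C\<close>] sum_f_pos[OF \<open>y \<in> C\<close>] by (simp add: ln_mult_pos)
  finally show "ln (\<Sum>i\<in>I. f i z) \<le> (1 - t) * ln (\<Sum>i\<in>I. f i x) + t * ln (\<Sum>i\<in>I. f i y)" .
qed

lemma convex_on_ln_powr_affine:
  assumes "linear l" "convex C" "\<And>x. x \<in> C \<Longrightarrow> 0 < c + l x" "0 \<le> N"
  shows "convex_on C (\<lambda>x. ln ((c + l x) powr - N))"
proof
  fix t :: real and x y
  assume t: "0 < t" "t < 1" and "x \<in> C" "y \<in> C"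
  have affine: "c + l ((1 - t) *\<^sub>R x + t *\<^sub>R y) = (1 - t) * (c + l x) + t * (c + l y)"
    by (simp only: linear_add[OF \<open>linear l\<close>] linear_scale[OF \<open>linear l\<close>]) (simp add: algebra_simps)
  have "(1 - t) * ln (c + l x) + t * ln (c + l y) \<le> ln ((1 - t) * (c + l x) + t * (c + l y))"
    using concave_onD[OF ln_concave, of t] t assms(3) \<open>x \<in> C\<close> \<open>y \<in> C\<close> by simp
  then have "- N * ln (c + l ((1 - t) *\<^sub>R x + t *\<^sub>R y))
      \<le> - N * ((1 - t) * ln (c + l x) + t * ln (c + l y))"
    unfolding affine using \<open>0 \<le> N\<close> by (intro mult_left_mono_neg) auto
  then show "ln ((c + l ((1 - t) *\<^sub>R x + t *\<^sub>R y)) powr - N)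
      \<le> (1 - t) * ln ((c + l x) powr - N) + t * ln ((c + l y) powr - N)"
    by (simp add: algebra_simps)
qed fact

lemma convex_on_sum_fun:
  assumes "finite I" "convex C" "\<And>i. i \<in> I \<Longrightarrow> convex_on C (f i)"
  shows "convex_on C (\<lambda>x. \<Sum>i\<in>I. f i x)"
  using assms by (induction I rule: finite_induct) (auto simp: convex_on_const)

lemma convex_on_gfun:
  assumes "M \<ge> 1" "N \<ge> 0"
  shows "convex_on {W. psd_herm W} (gfun M e N)"
proof -
  have "convex_on {W. psd_herm W}
      (\<lambda>W. ln (\<Sum>n\<in>{1..M}. (1 + Re (qform W (e m n)) / 2) powr - N))" for m
  proof (rule convex_on_ln_sum)
    fix n
    show "convex_on {W. psd_herm W} (\<lambda>W. ln ((1 + Re (qform W (e m n)) / 2) powr - N))"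
      using linear_Re_qform_divide psd_herm_summand_base_pos convex_psd_herm \<open>N \<ge> 0\<close>
      by (intro convex_on_ln_powr_affine) auto
  qed (use \<open>M \<ge> 1\<close> psd_herm_summand_pos in auto)
  then show ?thesis
    unfolding gfun_def log_def
    by (intro convex_on_cmul convex_on_cdiv convex_on_sum_fun convex_psd_herm) auto
qed

lemma gfun_antimono:
  assumes "M \<ge> 1" "N \<ge> 0" "psd_herm W2" "psd_herm (W1 - W2)"
  shows "gfun M e N W1 \<le> gfun M e N W2"
proof -
  define S where "S W m = (\<Sum>n\<in>{1..M}. (1 + Re (qform W (e m n)) / 2) powr - N)" for W m
  have "psd_herm W1"
    using psd_herm_add[OF assms(3,4)] by simp
  have S_pos: "0 < S W m" if "psd_herm W" for W m
    unfolding S_def using \<open>M \<ge> 1\<close> psd_herm_summand_pos[OF that] by (intro sum_pos) auto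
  have "S W1 m \<le> S W2 m" for m
    unfolding S_def
    using psd_herm_Re_qform_mono[OF assms(4)] psd_herm_summand_base_pos[OF assms(3)] \<open>N \<ge> 0\<close>
    by (intro sum_mono powr_mono2') auto
  then have "log 2 (S W1 m) \<le> log 2 (S W2 m)" for m
    using S_pos \<open>psd_herm W1\<close> by (intro log_mono) auto
  then show ?thesis
    unfolding gfun_def S_def[symmetric] by (intro mult_left_mono sum_mono) auto
qed

theorem proposition4:
  fixes M :: nat and N :: real and e :: "nat \<Rightarrow> nat \<Rightarrow> complex^'r"
  assumes "M \<ge> 1" and "N \<ge> 1"
  shows "convex_on {W. psd_herm W} (gfun M e N)
     \<and> (\<forall>W1 W2. psd_herm W2 \<and> psd_herm (W1 - W2) \<longrightarrow> gfun M e N W1 \<le> gfun M e N W2)"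
proof -
  have "N \<ge> 0"
    using \<open>N \<ge> 1\<close> by simp
  with \<open>M \<ge> 1\<close> show ?thesis
    using convex_on_gfun gfun_antimono by blast
qed

end
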